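(* Let $n\ge3$ and $B_n=\langle a,b\mid ba=b^n\rangle$. 1. $\mathcal L(B_n)$ is closed under set addition, i.e. $L_1+L_2\in\mathcal L(B_n)$ for all $L_1,L_2\in\mathcal L(B_n)$; hence $\mathcal L(B_n)$ is a monoid under set addition with identity $\{0\}$. 2. The map $\Phi:\mathcal L(B_n)\to H$, $x+(n-2)\cdot[0,q]\mapsto(x,q)$, is a monoid isomorphism onto $H=\{(k,i)\mid k,i\in\mathbb N_0,\ k=i=0\text{ or }k>i\}\subset(\mathbb N_0^2,+)$. Moreover, $H$ is a reduced atomic commutative cancellative half-factorial monoid with $\mathcal A(H)=\{(k,k-1)\mid k\in\mathbb N\}$.
   Context: $B_n$ is the monoid with generators $a,b$ and single relation $ba=b^n$; its atoms are $a,b$. $\mathsf L(y)$ is the set of $k$ such that $y$ is a product of $k$ atoms ($\mathsf L(1)=\{0\}$), $\mathcal L(B_n)=\{\mathsf L(y)\mid y\in B_n\}$; every element of $\mathcal L(B_n)$ has the form $x+(n-2)\cdot[0,q]=\{x,x+(n-2),\dots,x+q(n-2)\}$ with $x,q\in\mathbb N_0$ and ($x=q=0$ or $x>q$), uniquely determined by $(x,q)$. For sets $L_1,L_2\subset\mathbb Z$, $L_1+L_2=\{l_1+l_2\mid l_i\in L_i\}$. A monoid is half-factorial if every non-unit's factorizations into atoms all have the same length; $\mathcal A(H)$ denotes the set of atoms. *)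

theory Defs
  imports Main "HOL-Library.Set_Algebras" "HOL-Library.Product_Plus"
begin

datatype letter = A | B

text \<open>One-step rewriting u (b a) v ~> u b^n v; its equivalence closure is the
  monoid congruence generated by the relation ba = b^n, so the classes are
  exactly the elements of B_n.\<close>

definition Bstep :: "nat \<Rightarrow> letter list \<Rightarrow> letter list \<Rightarrow> bool" where
  "Bstep n u v \<longleftrightarrow> (\<exists>p s. u = p @ [B, A] @ s \<and> v = p @ replicate n B @ s)"

definition Bcong :: "nat \<Rightarrow> letter list \<Rightarrow> letter list \<Rightarrow> bool" where
  "Bcong n = equivclp (Bstep n)"

text \<open>Since the atoms of B_n are a and b, a factorization of the element
  represented by w of length k is a word of length k representing the same
  element. Hence the set of lengths:\<close>

definition Lset :: "nat \<Rightarrow> letter list \<Rightarrow> nat set" where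
  "Lset n w = {length w' | w'. Bcong n w w'}"

definition LB :: "nat \<Rightarrow> nat set set" where
  "LB n = {Lset n w | w. True}"

definition arith_set :: "nat \<Rightarrow> nat \<Rightarrow> nat \<Rightarrow> nat set" where
  "arith_set n x q = {x + (n - 2) * j | j. j \<le> q}"

definition Phi :: "nat \<Rightarrow> nat set \<Rightarrow> nat \<times> nat" where
  "Phi n L = (THE (x, q). L = arith_set n x q \<and> ((x = 0 \<and> q = 0) \<or> x > q))"

definition Hset :: "(nat \<times> nat) set" where
  "Hset = {(k, i). (k = 0 \<and> i = 0) \<or> k > i}"

definition submonoid :: "'a::comm_monoid_add set \<Rightarrow> bool" where
  "submonoid S \<longleftrightarrow> 0 \<in> S \<and> (\<forall>x\<in>S. \<forall>y\<in>S. x + y \<in> S)"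

definition units_in :: "'a::comm_monoid_add set \<Rightarrow> 'a set" where
  "units_in S = {u \<in> S. \<exists>v\<in>S. u + v = 0}"

definition atoms_of :: "'a::comm_monoid_add set \<Rightarrow> 'a set" where
  "atoms_of S = {a \<in> S. a \<notin> units_in S \<and>
     (\<forall>u\<in>S. \<forall>v\<in>S. a = u + v \<longrightarrow> u \<in> units_in S \<or> v \<in> units_in S)}"

definition reduced :: "'a::comm_monoid_add set \<Rightarrow> bool" where
  "reduced S \<longleftrightarrow> units_in S = {0}"

definition cancellative_in :: "'a::comm_monoid_add set \<Rightarrow> bool" where
  "cancellative_in S \<longleftrightarrow> (\<forall>x\<in>S. \<forall>y\<in>S. \<forall>z\<in>S. x + z = y + z \<longrightarrow> x = y)"

definition commutative_in :: "'a::comm_monoid_add set \<Rightarrow> bool" where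
  "commutative_in S \<longleftrightarrow> (\<forall>x\<in>S. \<forall>y\<in>S. x + y = y + x)"

definition atomic :: "'a::comm_monoid_add set \<Rightarrow> bool" where
  "atomic S \<longleftrightarrow> (\<forall>x\<in>S - units_in S. \<exists>as. as \<noteq> [] \<and> set as \<subseteq> atoms_of S \<and> sum_list as = x)"

definition half_factorial :: "'a::comm_monoid_add set \<Rightarrow> bool" where
  "half_factorial S \<longleftrightarrow> atomic S \<and>
     (\<forall>x\<in>S - units_in S. \<forall>as bs. set as \<subseteq> atoms_of S \<and> set bs \<subseteq> atoms_of S
        \<and> sum_list as = x \<and> sum_list bs = x \<longrightarrow> length as = length bs)"

end

theory Submission
  imports Defs
begin

text \<open>The number of leading a's and the weight (a counting \<open>n - 1\<close>, b counting 1) are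
  invariants of \<open>ba = b\<^sup>n\<close>, and together with the normal form \<open>a\<^sup>l b\<^sup>m\<close> they classify
  the elements of \<open>B\<^sub>n\<close>. A factorization of the element with invariants \<open>(l, W)\<close> is
  \<open>a\<^sup>l\<close>, or \<open>a\<^sup>l b u\<close> with \<open>u\<close> an arbitrary word of weight \<open>M = W - (n - 1) l - 1\<close>, and a
  word of weight \<open>M\<close> with \<open>c\<close> letters a has length \<open>M - (n - 2) c\<close>. So the length sets are
  exactly the progressions \<open>x + (n - 2)\<cdot>[0, q]\<close> with \<open>(x, q) \<in> H\<close>, and adding two of them
  adds the parameters. In \<open>H\<close> the difference \<open>k - i\<close> is additive and equals 1 precisely on
  the atoms, so it counts the atoms of every factorization.\<close>

lemma count_list_replicate [simp]:
  "count_list (replicate m x) y = (if x = y then m else 0)"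
  by (induction m) auto

fun leading_As :: "letter list \<Rightarrow> nat" where
  "leading_As [] = 0"
| "leading_As (A # w) = Suc (leading_As w)"
| "leading_As (B # w) = 0"

text \<open>For \<open>n \<ge> 2\<close> the letter a has weight \<open>n - 1\<close> and b has weight 1, so both sides
  of \<open>ba = b\<^sup>n\<close> have weight \<open>n\<close>.\<close>

definition weight :: "nat \<Rightarrow> letter list \<Rightarrow> nat" where
  "weight n w = length w + (n - 2) * count_list w A"

lemma weight_Nil [simp]: "weight n [] = 0"
  by (simp add: weight_def)

lemma weight_append [simp]: "weight n (u @ v) = weight n u + weight n v"
  by (simp add: weight_def algebra_simps)

lemma weight_Cons_B [simp]: "weight n (B # w) = Suc (weight n w)"
  by (simp add: weight_def)

lemma weight_Cons_A [simp]: "n \<ge> 2 \<Longrightarrow> weight n (A # w) = (n - 1) + weight n w"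
  by (auto simp: weight_def dest!: le_Suc_ex)

lemma weight_replicate_B [simp]: "weight n (replicate m B) = m"
  by (simp add: weight_def)

lemma weight_replicate_A [simp]: "n \<ge> 2 \<Longrightarrow> weight n (replicate m A) = (n - 1) * m"
  by (induction m) auto

lemma leading_As_replicate_A_B [simp]: "leading_As (replicate m A @ B # u) = m"
  by (induction m) auto

lemma leading_As_replicate_A [simp]: "leading_As (replicate m A) = m"
  by (induction m) auto

lemma leading_As_le_weight: "n \<ge> 2 \<Longrightarrow> (n - 1) * leading_As w \<le> weight n w"
  by (induction w rule: leading_As.induct) auto

lemma leading_As_decomp:
  obtains r where "w = replicate (leading_As w) A @ r" "r = [] \<or> (\<exists>u. r = B # u)"
  by (induction w arbitrary: thesis rule: leading_As.induct) auto

lemma Bstep_invariants: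
  assumes "n \<ge> 2" "Bstep n u v"
  shows "leading_As u = leading_As v \<and> weight n u = weight n v"
proof -
  obtain p s where ps: "u = p @ [B, A] @ s" "v = p @ replicate n B @ s"
    using assms(2) unfolding Bstep_def by blast
  have "leading_As (p @ [B, A] @ s) = leading_As (p @ replicate n B @ s)"
  proof (induction p rule: leading_As.induct)
    case 1 show ?case using assms(1) by (cases n) auto
  qed auto
  then show ?thesis using ps assms(1) by simp
qed

lemma Bcong_invariants:
  assumes "n \<ge> 2" "Bcong n u v"
  shows "leading_As u = leading_As v \<and> weight n u = weight n v"
  using assms(2) unfolding Bcong_def
proof (induction rule: equivclp_induct)
  case (step y z)
  then show ?case using Bstep_invariants[OF assms(1), of y z] Bstep_invariants[OF assms(1), of z y]
    by auto
qed simp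

lemma Bcong_append_left: "Bcong n u v \<Longrightarrow> Bcong n (p @ u) (p @ v)"
  unfolding Bcong_def
proof (induction rule: equivclp_induct)
  case (step y z)
  have "Bstep n (p @ y) (p @ z) \<or> Bstep n (p @ z) (p @ y)"
    using step.hyps(2) unfolding Bstep_def by (metis append.assoc)
  then show ?case using step.IH by (meson equivclp_into_equivclp)
qed simp

lemma Bcong_replicate_B_absorb:
  assumes "n \<ge> 2" "m \<ge> 1"
  shows "Bcong n (replicate m B @ u) (replicate (m + weight n u) B)"
  using assms(2)
proof (induction u arbitrary: m)
  case Nil
  then show ?case by (simp add: Bcong_def)
next
  case (Cons x u)
  show ?case
  proof (cases x)
    case A
    obtain m' where m': "m = Suc m'" using Cons.prems by (cases m) auto
    have "Bstep n (replicate m' B @ [B, A] @ u) (replicate m' B @ replicate n B @ u)"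
      unfolding Bstep_def by blast
    then have "Bcong n (replicate m B @ A # u) (replicate (m' + n) B @ u)"
      using m' unfolding Bcong_def
      by (simp add: replicate_add replicate_app_Cons_same r_into_equivclp)
    moreover have "Bcong n (replicate (m' + n) B @ u) (replicate (m' + n + weight n u) B)"
      using Cons.IH assms(1) by simp
    moreover have "m' + n + weight n u = m + weight n (A # u)"
      using m' assms(1) by simp
    ultimately show ?thesis
      using A unfolding Bcong_def by (metis equivclp_trans)
  next
    case B
    then show ?thesis
      using Cons.IH[of "Suc m"] by (simp add: replicate_app_Cons_same)
  qed
qed

lemma Bcong_normal_form:
  assumes "n \<ge> 2"
  shows "Bcong n w (replicate (leading_As w) A @ replicate (weight n w - (n - 1) * leading_As w) B)"
proof (induction w rule: leading_As.induct)
  case 1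
  then show ?case by (simp add: Bcong_def)
next
  case (2 w)
  have "weight n (A # w) - (n - 1) * leading_As (A # w) = weight n w - (n - 1) * leading_As w"
    using assms leading_As_le_weight[OF assms, of w] by simp
  then show ?case using Bcong_append_left[OF "2", of "[A]"] by simp
next
  case (3 w)
  then show ?case using Bcong_replicate_B_absorb[OF assms, of 1 w] by simp
qed

lemma Bcong_iff:
  assumes "n \<ge> 2"
  shows "Bcong n u v \<longleftrightarrow> leading_As u = leading_As v \<and> weight n u = weight n v"
proof
  assume "leading_As u = leading_As v \<and> weight n u = weight n v"
  then show "Bcong n u v"
    using Bcong_normal_form[OF assms, of u] Bcong_normal_form[OF assms, of v]
    unfolding Bcong_def by (metis equivclp_sym equivclp_trans)
qed (use Bcong_invariants assms in blast)

lemma arith_set_shift: "(+) c ` arith_set n x q = arith_set n (c + x) q"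
  unfolding arith_set_def by (auto simp: image_iff add.assoc)

lemma lengths_of_weight:
  assumes "n \<ge> 2"
  shows "{length u | u. weight n u = M}
    = arith_set n (M - (n - 2) * (M div (n - 1))) (M div (n - 1))"
proof -
  define k where "k = n - 2"
  define Q where "Q = M div (k + 1)"
  have n1: "n - 1 = k + 1" using assms k_def by simp
  have kQ: "(k + 1) * Q \<le> M"
    unfolding Q_def by (metis div_times_less_eq_dividend mult.commute)
  have "{length u | u. weight n u = M} = {M - k * Q + k * j | j. j \<le> Q}"
  proof (intro set_eqI iffI)
    fix y assume "y \<in> {length u | u. weight n u = M}"
    then obtain u where u: "y = length u" "weight n u = M" by blast
    define c where "c = count_list u A"
    have "M = y + k * c" "c \<le> y"
      using u count_le_length[of u A] unfolding c_def weight_def k_def by auto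
    then have "(k + 1) * c \<le> M" by simp
    then have "c \<le> Q"
      unfolding Q_def using div_le_mono[of "(k + 1) * c" M "k + 1"]
      by (simp only: nonzero_mult_div_cancel_left[of "k + 1"])
    then have "y = M - k * Q + k * (Q - c)"
      using \<open>M = y + k * c\<close> kQ by (simp add: diff_mult_distrib2 algebra_simps)
    then show "y \<in> {M - k * Q + k * j | j. j \<le> Q}" by auto
  next
    fix y assume "y \<in> {M - k * Q + k * j | j. j \<le> Q}"
    then obtain j where j: "j \<le> Q" "y = M - k * Q + k * j" by blast
    define c where "c = Q - j"
    have kc: "(k + 1) * c \<le> M"
      using kQ unfolding c_def by (meson diff_le_self le_trans mult_le_mono2)
    define u where "u = replicate c A @ replicate (M - (k + 1) * c) B"
    have "weight n u = M" unfolding u_def using assms n1 kc by simp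
    moreover have "length u = M - k * c"
      using kc unfolding u_def by simp
    moreover have "M - k * c = y"
    proof -
      have "k * c = k * Q - k * j" "k * j \<le> k * Q"
        unfolding c_def using j(1) by (simp_all add: diff_mult_distrib2)
      then show ?thesis using j(2) kQ by simp
    qed
    ultimately show "y \<in> {length u | u. weight n u = M}" by auto
  qed
  then show ?thesis unfolding arith_set_def k_def Q_def n1 by simp
qed

lemma Lset_eq_lengths:
  "n \<ge> 2 \<Longrightarrow> Lset n w
    = {length v | v. leading_As v = leading_As w \<and> weight n v = weight n w}"
  unfolding Lset_def using Bcong_iff by metis

lemma lengths_leading_As_minimal_weight:
  assumes "n \<ge> 2"
  shows "{length v | v. leading_As v = l \<and> weight n v = (n - 1) * l} = {l}"
proof (intro set_eqI iffI)
  fix y assume "y \<in> {length v | v. leading_As v = l \<and> weight n v = (n - 1) * l}"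
  then obtain v where v: "y = length v" "leading_As v = l" "weight n v = (n - 1) * l" by blast
  obtain r where r: "v = replicate l A @ r" "r = [] \<or> (\<exists>u. r = B # u)"
    using leading_As_decomp v(2) by metis
  have "weight n r = 0" using arg_cong[OF r(1), of "weight n"] v(3) assms by simp
  then have "r = []" using r(2) by auto
  then show "y \<in> {l}" using r(1) v(1) by simp
qed (use assms in \<open>auto intro!: exI[of _ "replicate l A"]\<close>)

lemma lengths_leading_As_weight_gt:
  assumes "n \<ge> 2" "W > (n - 1) * l"
  shows "{length v | v. leading_As v = l \<and> weight n v = W}
    = (+) (Suc l) ` {length u | u. weight n u = W - (n - 1) * l - 1}"
proof (intro set_eqI iffI)
  fix y assume "y \<in> {length v | v. leading_As v = l \<and> weight n v = W}"
  then obtain v where v: "y = length v" "leading_As v = l" "weight n v = W" by blast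
  obtain r where r: "v = replicate l A @ r" "r = [] \<or> (\<exists>u. r = B # u)"
    using leading_As_decomp v(2) by metis
  have "weight n r = W - (n - 1) * l"
    using arg_cong[OF r(1), of "weight n"] v(3) assms by simp
  then obtain u where "r = B # u" "weight n u = W - (n - 1) * l - 1"
    using r(2) assms(2) by auto
  then show "y \<in> (+) (Suc l) ` {length u | u. weight n u = W - (n - 1) * l - 1}"
    using r(1) v(1) by auto
next
  fix y assume "y \<in> (+) (Suc l) ` {length u | u. weight n u = W - (n - 1) * l - 1}"
  then obtain u where "y = Suc l + length u" "weight n u = W - (n - 1) * l - 1" by blast
  then show "y \<in> {length v | v. leading_As v = l \<and> weight n v = W}"
    using assms by (auto intro!: exI[of _ "replicate l A @ B # u"])
qed

lemma arith_set_0 [simp]: "arith_set n x 0 = {x}"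
  unfolding arith_set_def by auto

lemma Lset_is_arith_set:
  assumes "n \<ge> 2"
  obtains x q where "(x, q) \<in> Hset" "Lset n w = arith_set n x q"
proof (cases "weight n w = (n - 1) * leading_As w")
  case True
  then have "Lset n w = arith_set n (leading_As w) 0"
    using Lset_eq_lengths[OF assms] lengths_leading_As_minimal_weight[OF assms] by simp
  then show ?thesis using that unfolding Hset_def by blast
next
  case False
  define l where "l = leading_As w"
  define M where "M = weight n w - (n - 1) * l - 1"
  define Q where "Q = M div (n - 1)"
  have "weight n w > (n - 1) * l"
    using False leading_As_le_weight[OF assms, of w] unfolding l_def by simp
  then have "Lset n w = (+) (Suc l) ` arith_set n (M - (n - 2) * Q) Q"
    using Lset_eq_lengths[OF assms] lengths_leading_As_weight_gt[OF assms]
      lengths_of_weight[OF assms] unfolding l_def M_def Q_def by simp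
  also have "\<dots> = arith_set n (Suc l + (M - (n - 2) * Q)) Q"
    by (rule arith_set_shift)
  finally have "Lset n w = arith_set n (Suc l + (M - (n - 2) * Q)) Q" .
  moreover have "(n - 2) * Q + Q \<le> M"
  proof -
    have "n - 1 = Suc (n - 2)" using assms by simp
    then have "(n - 2) * Q + Q = (n - 1) * Q" by simp
    then show ?thesis using div_times_less_eq_dividend[of M "n - 1"] unfolding Q_def
      by (simp add: mult.commute)
  qed
  ultimately show ?thesis
    by (intro that[of "Suc l + (M - (n - 2) * Q)" Q]) (auto simp: Hset_def)
qed

lemma arith_set_is_Lset:
  assumes "n \<ge> 2" "(x, q) \<in> Hset"
  obtains w where "Lset n w = arith_set n x q"
proof (cases "q = 0")
  case True
  have "Lset n (replicate x A) = arith_set n x 0"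
    using Lset_eq_lengths[OF assms(1)] lengths_leading_As_minimal_weight[OF assms(1)] assms(1)
    by simp
  then show ?thesis using True that by blast
next
  case False
  then have "x > q" using assms(2) unfolding Hset_def by auto
  define l where "l = x - q - 1"
  have n1: "n - 1 = Suc (n - 2)" using assms(1) by simp
  have "Lset n (replicate l A @ B # replicate q A)
    = (+) (Suc l) ` {length u | u. weight n u = (n - 1) * q}"
    using Lset_eq_lengths[OF assms(1)] lengths_leading_As_weight_gt[OF assms(1)] assms(1)
    by simp
  also have "\<dots> = (+) (Suc l) ` arith_set n q q"
  proof -
    have "(n - 1) * q div (n - 1) = q"
      using assms(1) by simp
    moreover have "(n - 1) * q - (n - 2) * q = q"
      by (simp only: n1 mult_Suc diff_add_inverse2)
    ultimately
    show ?thesis using lengths_of_weight[OF assms(1), of "(n - 1) * q"] by simp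
  qed
  also have "\<dots> = arith_set n x q"
    using arith_set_shift[of "Suc l" n q q] \<open>x > q\<close> unfolding l_def by simp
  finally show ?thesis using that by blast
qed

lemma LB_eq_image_Hset:
  assumes "n \<ge> 2"
  shows "LB n = (\<lambda>(x, q). arith_set n x q) ` Hset"
proof (intro set_eqI iffI)
  fix L assume "L \<in> LB n"
  then obtain w where "L = Lset n w" unfolding LB_def by blast
  moreover obtain x q where "(x, q) \<in> Hset" "Lset n w = arith_set n x q"
    using Lset_is_arith_set[OF assms] .
  ultimately show "L \<in> (\<lambda>(x, q). arith_set n x q) ` Hset"
    by (auto intro!: image_eqI[of _ _ "(x, q)"])
next
  fix L assume "L \<in> (\<lambda>(x, q). arith_set n x q) ` Hset"
  then obtain p where "p \<in> Hset" "L = (\<lambda>(x, q). arith_set n x q) p" by blast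
  then obtain x q where "(x, q) \<in> Hset" "L = arith_set n x q" by (cases p) simp
  then obtain w where "Lset n w = L" using arith_set_is_Lset[OF assms] by metis
  then show "L \<in> LB n" unfolding LB_def by blast
qed

lemma arith_set_inject:
  assumes "n \<ge> 3" "arith_set n x q = arith_set n x' q'"
  shows "x = x' \<and> q = q'"
proof -
  have bounds: "a \<in> arith_set n a r" "a + (n - 2) * r \<in> arith_set n a r"
    "y \<in> arith_set n a r \<Longrightarrow> a \<le> y \<and> y \<le> a + (n - 2) * r" for a r y
    unfolding arith_set_def by force+
  note bounds1 = bounds[where a = x and r = q] and bounds2 = bounds[where a = x' and r = q']
  have "x = x'" using bounds1 bounds2 assms(2) by (metis antisym)
  moreover have "(n - 2) * q = (n - 2) * q'"
    using bounds1 bounds2 assms(2) \<open>x = x'\<close> by (metis add_le_cancel_left antisym)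
  ultimately show ?thesis using assms(1) by simp
qed

lemma Phi_arith_set:
  assumes "n \<ge> 3" "(x, q) \<in> Hset"
  shows "Phi n (arith_set n x q) = (x, q)"
  unfolding Phi_def
proof (rule the_equality)
  show "case (x, q) of (x', q') \<Rightarrow> arith_set n x q = arith_set n x' q' \<and> (x' = 0 \<and> q' = 0 \<or> q' < x')"
    using assms(2) unfolding Hset_def by auto
next
  fix p assume "case p of (x', q') \<Rightarrow> arith_set n x q = arith_set n x' q' \<and> (x' = 0 \<and> q' = 0 \<or> q' < x')"
  then show "p = (x, q)" using arith_set_inject[OF assms(1)] by (cases p) auto
qed

lemma arith_set_plus:
  "arith_set n x1 q1 + arith_set n x2 q2 = arith_set n (x1 + x2) (q1 + q2)"
proof (intro set_eqI iffI)
  fix y assume "y \<in> arith_set n x1 q1 + arith_set n x2 q2"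
  then obtain j1 j2 where "j1 \<le> q1" "j2 \<le> q2" "y = x1 + (n - 2) * j1 + (x2 + (n - 2) * j2)"
    unfolding set_plus_def arith_set_def by auto
  then show "y \<in> arith_set n (x1 + x2) (q1 + q2)"
    unfolding arith_set_def by (intro CollectI exI[of _ "j1 + j2"]) (simp add: add_mult_distrib2)
next
  fix y assume "y \<in> arith_set n (x1 + x2) (q1 + q2)"
  then obtain j where j: "j \<le> q1 + q2" "y = x1 + x2 + (n - 2) * j"
    unfolding arith_set_def by auto
  define j1 where "j1 = min j q1"
  have "x1 + (n - 2) * j1 \<in> arith_set n x1 q1" "x2 + (n - 2) * (j - j1) \<in> arith_set n x2 q2"
    using j(1) unfolding arith_set_def j1_def by auto
  moreover have "y = (x1 + (n - 2) * j1) + (x2 + (n - 2) * (j - j1))"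
  proof -
    have "j = j1 + (j - j1)" unfolding j1_def by simp
    then show ?thesis using j(2) by (metis add.assoc add.left_commute add_mult_distrib2)
  qed
  ultimately show "y \<in> arith_set n x1 q1 + arith_set n x2 q2" by (auto intro: set_plus_intro)
qed

lemma commutative_in_comm_monoid_add: "commutative_in (S :: 'a::comm_monoid_add set)"
  unfolding commutative_in_def by (simp add: add.commute)

lemma cancellative_in_cancel_comm_monoid_add:
  "cancellative_in (S :: 'a::cancel_comm_monoid_add set)"
  unfolding cancellative_in_def by simp

lemma zero_in_Hset: "0 \<in> Hset"
  unfolding Hset_def by (simp add: zero_prod_def)

lemma Hset_add: "a \<in> Hset \<Longrightarrow> b \<in> Hset \<Longrightarrow> a + b \<in> Hset"
  unfolding Hset_def by (cases a; cases b) auto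

lemma submonoid_Hset: "submonoid Hset"
  unfolding submonoid_def using zero_in_Hset Hset_add by blast

lemma units_in_Hset: "units_in Hset = {0}"
  unfolding units_in_def Hset_def by (auto simp: zero_prod_def)

lemma reduced_Hset: "reduced Hset"
  unfolding reduced_def by (rule units_in_Hset)

lemma atoms_of_Hset: "atoms_of Hset = {(k, k - 1) | k. k \<ge> 1}"
proof (intro set_eqI iffI)
  fix p assume p: "p \<in> atoms_of Hset"
  obtain k i where ki: "p = (k, i)" by (cases p)
  have "p \<in> Hset" "p \<noteq> 0" using p units_in_Hset unfolding atoms_of_def by auto
  then have "i < k" using ki unfolding Hset_def by (auto simp: zero_prod_def)
  show "p \<in> {(k, k - 1) | k. k \<ge> 1}"
  proof (rule ccontr)
    assume "p \<notin> {(k, k - 1) | k. k \<ge> 1}"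
    then have "i < k - 1" using ki \<open>i < k\<close> by auto
    then have "(k - 1, i) \<in> Hset - {0}" "(1, 0) \<in> Hset - {0}" "p = (k - 1, i) + (1, 0)"
      using ki unfolding Hset_def by (auto simp: zero_prod_def)
    then show False using p units_in_Hset unfolding atoms_of_def by blast
  qed
next
  fix p :: "nat \<times> nat" assume "p \<in> {(k, k - 1) | k. k \<ge> 1}"
  then obtain k where k: "p = (k, k - 1)" "k \<ge> 1" by blast
  have "u = 0 \<or> v = 0" if "u \<in> Hset" "v \<in> Hset" "p = u + v" for u v
    using that k unfolding Hset_def by (cases u; cases v) (auto simp: zero_prod_def)
  moreover have "p \<in> Hset" "p \<noteq> 0" using k unfolding Hset_def by (auto simp: zero_prod_def)
  ultimately show "p \<in> atoms_of Hset" unfolding atoms_of_def units_in_Hset by blast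
qed

lemma sum_list_atoms_of_Hset:
  "set as \<subseteq> atoms_of Hset \<Longrightarrow> fst (sum_list as) = snd (sum_list as) + length as"
  unfolding atoms_of_Hset by (induction as) auto

lemma atomic_Hset: "atomic Hset"
  unfolding atomic_def
proof
  fix p assume "p \<in> Hset - units_in Hset"
  then have "p \<in> Hset" "p \<noteq> 0" by (auto simp: units_in_Hset)
  then obtain k i where ki: "p = (k, i)" "i < k"
    unfolding Hset_def by (auto simp: zero_prod_def)
  define as where "as = (Suc i, i) # replicate (k - i - 1) (1, 0)"
  have "sum_list (replicate m (1::nat, 0::nat)) = (m, 0)" for m
    by (induction m) (auto simp: zero_prod_def)
  then have "sum_list as = p" unfolding as_def using ki by simp
  moreover have "set as \<subseteq> atoms_of Hset" unfolding atoms_of_Hset as_def by auto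
  ultimately show "\<exists>as. as \<noteq> [] \<and> set as \<subseteq> atoms_of Hset \<and> sum_list as = p"
    unfolding as_def by blast
qed

lemma half_factorial_Hset: "half_factorial Hset"
  unfolding half_factorial_def
proof (intro conjI atomic_Hset ballI allI impI)
  fix x as bs
  assume "set as \<subseteq> atoms_of Hset \<and> set bs \<subseteq> atoms_of Hset \<and> sum_list as = x \<and> sum_list bs = x"
  then show "length as = length bs" using sum_list_atoms_of_Hset[of as] sum_list_atoms_of_Hset[of bs] by simp
qed

lemma arith_set_in_LB: "n \<ge> 2 \<Longrightarrow> (x, q) \<in> Hset \<Longrightarrow> arith_set n x q \<in> LB n"
  by (auto simp: LB_eq_image_Hset)

lemma LB_elim:
  assumes "n \<ge> 2" "L \<in> LB n"
  obtains x q where "(x, q) \<in> Hset" "L = arith_set n x q"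
  using assms by (auto simp: LB_eq_image_Hset)

lemma set_plus_in_LB:
  assumes "n \<ge> 2" "L1 \<in> LB n" "L2 \<in> LB n"
  shows "L1 + L2 \<in> LB n"
proof -
  obtain x1 q1 x2 q2 where "(x1, q1) \<in> Hset" "L1 = arith_set n x1 q1"
    "(x2, q2) \<in> Hset" "L2 = arith_set n x2 q2"
    using LB_elim[OF assms(1)] assms(2,3) by metis
  then show ?thesis using Hset_add[of "(x1, q1)" "(x2, q2)"] arith_set_in_LB[OF assms(1)]
    by (simp add: arith_set_plus)
qed

lemma Phi_set_plus:
  assumes "n \<ge> 3" "L1 \<in> LB n" "L2 \<in> LB n"
  shows "Phi n (L1 + L2) = Phi n L1 + Phi n L2"
proof -
  have "n \<ge> 2" using assms(1) by simp
  obtain x1 q1 x2 q2 where "(x1, q1) \<in> Hset" "L1 = arith_set n x1 q1"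
    "(x2, q2) \<in> Hset" "L2 = arith_set n x2 q2"
    using LB_elim[OF \<open>n \<ge> 2\<close>] assms(2,3) by metis
  then show ?thesis using Hset_add[of "(x1, q1)" "(x2, q2)"] Phi_arith_set[OF assms(1)]
    by (simp add: arith_set_plus)
qed

lemma bij_betw_Phi: "n \<ge> 3 \<Longrightarrow> bij_betw (Phi n) (LB n) Hset"
  by (rule bij_betw_byWitness[where f' = "\<lambda>(x, q). arith_set n x q"])
    (auto simp: LB_eq_image_Hset Phi_arith_set)

theorem theorem4p5:
  fixes n :: nat
  assumes "n \<ge> 3"
  shows "(\<forall>L1\<in>LB n. \<forall>L2\<in>LB n. L1 + L2 \<in> LB n) \<and> {0} \<in> LB n
    \<and> bij_betw (Phi n) (LB n) Hset
    \<and> (\<forall>L1\<in>LB n. \<forall>L2\<in>LB n. Phi n (L1 + L2) = Phi n L1 + Phi n L2)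
    \<and> Phi n {0} = (0, 0)
    \<and> submonoid Hset \<and> reduced Hset \<and> atomic Hset \<and> commutative_in Hset
    \<and> cancellative_in Hset \<and> half_factorial Hset
    \<and> atoms_of Hset = {(k, k - 1) | k. k \<ge> 1}"
proof -
  have "n \<ge> 2" using assms by simp
  have "(0, 0) \<in> Hset" using zero_in_Hset by (simp add: zero_prod_def)
  then have "{0} \<in> LB n" "Phi n {0} = (0, 0)"
    using arith_set_in_LB[OF \<open>n \<ge> 2\<close>] Phi_arith_set[OF assms] by (metis arith_set_0)+
  then show ?thesis
    using set_plus_in_LB[OF \<open>n \<ge> 2\<close>] Phi_set_plus[OF assms] bij_betw_Phi[OF assms]
      submonoid_Hset reduced_Hset atomic_Hset commutative_in_comm_monoid_add
      cancellative_in_cancel_comm_monoid_add half_factorial_Hset atoms_of_Hset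
    by blast
qed

end
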